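(* Suppose $f:\overline{\mathcal{G}}\to\mathbb{R}$ is harmonic and $c$ is a regular value of $f$. Assume there is no $x\in\partial\overline{\mathcal{G}}$ with $f(x)=c$. Then $f^{-1}(c)$ is a finite set.
   Context: $\mathcal{G}$ is a connected, locally finite metric graph with countable vertex set and countable edge set. Each edge has a positive length and is identified with an interval. $\mathcal{G}$ carries the geodesic distance, and $\overline{\mathcal{G}}$ is its metric completion. A designated set of vertices, containing all vertices of degree $1$, forms the boundary vertices. $\mathcal{G}_{int}$ is $\mathcal{G}$ minus the boundary vertices, and $\partial\overline{\mathcal{G}}=\overline{\mathcal{G}}\setminus\mathcal{G}_{int}$. Standing assumptions: $\overline{\mathcal{G}}$ is compact and $\partial\overline{\mathcal{G}}$ is totally disconnected. A function $f:\overline{\mathcal{G}}\to\mathbb{R}$ is harmonic if it is continuous, linear on each edge, and satisfies $\sum_{e\sim v}\partial_\nu f_e(v)=0$ at every interior vertex $v$, where $\partial_\nu f_e(v)$ is the derivative of $f_e$ at $v$ in the direction from $v$ into the edge $e$. A point $x\in\mathcal{G}$ is a critical point of $f$ if $x$ is a vertex or $f'(x)=0$. A number is a critical value if its preimage contains a critical point. Values in the range of $f$ that are not critical values are regular values. *)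

theory Defs
  imports "HOL-Analysis.Analysis"
begin

text \<open>Points of the (uncompleted) metric graph: a vertex, or an interior point of an edge e
  at arclength parameter t (measured from the source of e), with 0 < t < len e.\<close>
datatype ('v,'e) gpt = Vtx 'v | Ept 'e real

definition pos :: "('e \<Rightarrow> 'v) \<Rightarrow> ('e \<Rightarrow> 'v) \<Rightarrow> ('e \<Rightarrow> real) \<Rightarrow> 'e \<Rightarrow> real \<Rightarrow> ('v,'e) gpt" where
  "pos src tgt len e t = (if t \<le> 0 then Vtx (src e) else if t \<ge> len e then Vtx (tgt e) else Ept e t)"

definition gpoints :: "'v set \<Rightarrow> 'e set \<Rightarrow> ('e \<Rightarrow> real) \<Rightarrow> ('v,'e) gpt set" where
  "gpoints V E len = Vtx ` V \<union> {Ept e t | e t. e \<in> E \<and> 0 < t \<and> t < len e}"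

definition degree :: "'e set \<Rightarrow> ('e \<Rightarrow> 'v) \<Rightarrow> ('e \<Rightarrow> 'v) \<Rightarrow> 'v \<Rightarrow> nat" where
  "degree E src tgt v = card {e\<in>E. src e = v} + card {e\<in>E. tgt e = v}"

definition metric_graph :: "'v set \<Rightarrow> 'e set \<Rightarrow> ('e \<Rightarrow> 'v) \<Rightarrow> ('e \<Rightarrow> 'v) \<Rightarrow> ('e \<Rightarrow> real) \<Rightarrow> bool" where
  "metric_graph V E src tgt len \<longleftrightarrow>
     countable V \<and> countable E \<and>
     (\<forall>e\<in>E. src e \<in> V \<and> tgt e \<in> V \<and> len e > 0) \<and>
     (\<forall>v\<in>V. finite {e\<in>E. src e = v \<or> tgt e = v}) \<and>
     (\<forall>u\<in>V. \<forall>w\<in>V. (u, w) \<in> ({(src e, tgt e) | e. e \<in> E} \<union> {(tgt e, src e) | e. e \<in> E})\<^sup>*)"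

definition edge_step :: "'e set \<Rightarrow> ('e \<Rightarrow> 'v) \<Rightarrow> ('e \<Rightarrow> 'v) \<Rightarrow> ('e \<Rightarrow> real)
    \<Rightarrow> ('v,'e) gpt \<Rightarrow> ('v,'e) gpt \<Rightarrow> real \<Rightarrow> bool" where
  "edge_step E src tgt len x y d \<longleftrightarrow>
     (\<exists>e\<in>E. \<exists>s t. 0 \<le> s \<and> s \<le> len e \<and> 0 \<le> t \<and> t \<le> len e \<and>
        pos src tgt len e s = x \<and> pos src tgt len e t = y \<and> d = \<bar>s - t\<bar>)"

inductive chain_len :: "'e set \<Rightarrow> ('e \<Rightarrow> 'v) \<Rightarrow> ('e \<Rightarrow> 'v) \<Rightarrow> ('e \<Rightarrow> real)
    \<Rightarrow> ('v,'e) gpt \<Rightarrow> ('v,'e) gpt \<Rightarrow> real \<Rightarrow> bool"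
  for E src tgt len where
  refl: "chain_len E src tgt len x x 0"
| step: "edge_step E src tgt len x y d1 \<Longrightarrow> chain_len E src tgt len y z d2
          \<Longrightarrow> chain_len E src tgt len x z (d1 + d2)"

definition gdist :: "'e set \<Rightarrow> ('e \<Rightarrow> 'v) \<Rightarrow> ('e \<Rightarrow> 'v) \<Rightarrow> ('e \<Rightarrow> real)
    \<Rightarrow> ('v,'e) gpt \<Rightarrow> ('v,'e) gpt \<Rightarrow> real" where
  "gdist E src tgt len x y = Inf {d. chain_len E src tgt len x y d}"

definition is_completion :: "'v set \<Rightarrow> 'e set \<Rightarrow> ('e \<Rightarrow> 'v) \<Rightarrow> ('e \<Rightarrow> 'v) \<Rightarrow> ('e \<Rightarrow> real)
    \<Rightarrow> (('v,'e) gpt \<Rightarrow> 'p::metric_space) \<Rightarrow> 'p set \<Rightarrow> bool" where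
  "is_completion V E src tgt len emb Gbar \<longleftrightarrow>
     emb ` gpoints V E len \<subseteq> Gbar \<and>
     (\<forall>x\<in>gpoints V E len. \<forall>y\<in>gpoints V E len. dist (emb x) (emb y) = gdist E src tgt len x y) \<and>
     Gbar \<subseteq> closure (emb ` gpoints V E len) \<and>
     complete Gbar"

text \<open>The boundary of the completion: Gbar minus the interior part G_int (G without boundary vertices B).\<close>
definition bdry :: "'v set \<Rightarrow> 'e set \<Rightarrow> ('e \<Rightarrow> real) \<Rightarrow> 'v set
    \<Rightarrow> (('v,'e) gpt \<Rightarrow> 'p) \<Rightarrow> 'p set \<Rightarrow> 'p set" where
  "bdry V E len B emb Gbar = Gbar - emb ` (gpoints V E len - Vtx ` B)"

definition totally_disconnected :: "'a::topological_space set \<Rightarrow> bool" where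
  "totally_disconnected S \<longleftrightarrow> (\<forall>T\<subseteq>S. connected T \<longrightarrow> (\<exists>a. T \<subseteq> {a}))"

definition slope :: "('e \<Rightarrow> 'v) \<Rightarrow> ('e \<Rightarrow> 'v) \<Rightarrow> ('e \<Rightarrow> real) \<Rightarrow> (('v,'e) gpt \<Rightarrow> 'p)
    \<Rightarrow> ('p \<Rightarrow> real) \<Rightarrow> 'e \<Rightarrow> real" where
  "slope src tgt len emb f e =
     (f (emb (pos src tgt len e (len e))) - f (emb (pos src tgt len e 0))) / len e"

text \<open>Harmonic: continuous on Gbar, linear on each edge, Kirchhoff condition at interior vertices.
  The outward derivative into e at v is slope e if v is the source of e and - slope e if v is the target.\<close>
definition harmonic :: "'v set \<Rightarrow> 'e set \<Rightarrow> ('e \<Rightarrow> 'v) \<Rightarrow> ('e \<Rightarrow> 'v) \<Rightarrow> ('e \<Rightarrow> real) \<Rightarrow> 'v set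
    \<Rightarrow> (('v,'e) gpt \<Rightarrow> 'p::topological_space) \<Rightarrow> 'p set \<Rightarrow> ('p \<Rightarrow> real) \<Rightarrow> bool" where
  "harmonic V E src tgt len B emb Gbar f \<longleftrightarrow>
     continuous_on Gbar f \<and>
     (\<forall>e\<in>E. \<exists>a b. \<forall>t\<in>{0..len e}. f (emb (pos src tgt len e t)) = a + b * t) \<and>
     (\<forall>v\<in>V - B. (\<Sum>e\<in>{e\<in>E. src e = v}. slope src tgt len emb f e)
                 - (\<Sum>e\<in>{e\<in>E. tgt e = v}. slope src tgt len emb f e) = 0)"

definition critical_point :: "('e \<Rightarrow> 'v) \<Rightarrow> ('e \<Rightarrow> 'v) \<Rightarrow> ('e \<Rightarrow> real) \<Rightarrow> (('v,'e) gpt \<Rightarrow> 'p)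
    \<Rightarrow> ('p \<Rightarrow> real) \<Rightarrow> ('v,'e) gpt \<Rightarrow> bool" where
  "critical_point src tgt len emb f x \<longleftrightarrow>
     (case x of Vtx v \<Rightarrow> True | Ept e t \<Rightarrow> slope src tgt len emb f e = 0)"

definition critical_value :: "'v set \<Rightarrow> 'e set \<Rightarrow> ('e \<Rightarrow> 'v) \<Rightarrow> ('e \<Rightarrow> 'v) \<Rightarrow> ('e \<Rightarrow> real)
    \<Rightarrow> (('v,'e) gpt \<Rightarrow> 'p) \<Rightarrow> ('p \<Rightarrow> real) \<Rightarrow> real \<Rightarrow> bool" where
  "critical_value V E src tgt len emb f c \<longleftrightarrow>
     (\<exists>x\<in>gpoints V E len. f (emb x) = c \<and> critical_point src tgt len emb f x)"

definition regular_value :: "'v set \<Rightarrow> 'e set \<Rightarrow> ('e \<Rightarrow> 'v) \<Rightarrow> ('e \<Rightarrow> 'v) \<Rightarrow> ('e \<Rightarrow> real)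
    \<Rightarrow> (('v,'e) gpt \<Rightarrow> 'p) \<Rightarrow> 'p set \<Rightarrow> ('p \<Rightarrow> real) \<Rightarrow> real \<Rightarrow> bool" where
  "regular_value V E src tgt len emb Gbar f c \<longleftrightarrow>
     c \<in> f ` Gbar \<and> \<not> critical_value V E src tgt len emb f c"

end

theory Submission
  imports Defs
begin

text \<open>A point of the level set lies off the boundary, hence is a point of the graph; being a
  regular point it is an interior edge point where f has nonzero slope. Within distance r of
  it (r smaller than its distance to both endpoints) every point of the completion lies on the
  same edge, where f is affine with nonzero slope, so the point is isolated in the level set. The level
  set is also compact, hence finite.\<close>

lemma pos_0 [simp]: "pos src tgt len e 0 = Vtx (src e)"
  by (simp add: pos_def)

lemma pos_len [simp]: "len e > 0 \<Longrightarrow> pos src tgt len e (len e) = Vtx (tgt e)"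
  by (simp add: pos_def)

lemma pos_interior [simp]: "0 < t \<Longrightarrow> t < len e \<Longrightarrow> pos src tgt len e t = Ept e t"
  by (simp add: pos_def)

lemma pos_eq_EptD: "pos src tgt len e' s = Ept e t \<Longrightarrow> e' = e \<and> s = t \<and> 0 < t \<and> t < len e"
  by (auto simp: pos_def split: if_splits)

lemma chain_len_nonneg: "chain_len E src tgt len x y d \<Longrightarrow> 0 \<le> d"
  by (induction rule: chain_len.induct) (auto simp: edge_step_def)

lemma chain_len_trans:
  "chain_len E src tgt len x y d1 \<Longrightarrow> chain_len E src tgt len y z d2
   \<Longrightarrow> chain_len E src tgt len x z (d1 + d2)"
proof (induction rule: chain_len.induct)
  case (refl x)
  then show ?case by simp
next
  case (step x y d1 z d2)
  then show ?case
    using chain_len.step[OF step(1) step(3)[OF step(4)]] by (simp add: add.assoc)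
qed

lemma edge_step_imp_chain_len: "edge_step E src tgt len x y d \<Longrightarrow> chain_len E src tgt len x y d"
  using chain_len.step[OF _ chain_len.refl] by fastforce

lemma edge_step_within_edge:
  assumes "e \<in> E" "s \<in> {0..len e}" "t \<in> {0..len e}"
  shows "edge_step E src tgt len (pos src tgt len e s) (pos src tgt len e t) \<bar>s - t\<bar>"
  unfolding edge_step_def using assms by auto

lemma gdist_le_chain_len:
  assumes "chain_len E src tgt len x y d"
  shows "gdist E src tgt len x y \<le> d"
  unfolding gdist_def
proof (rule cInf_lower)
  show "d \<in> {d. chain_len E src tgt len x y d}" using assms by simp
  show "bdd_below {d. chain_len E src tgt len x y d}"
    by (rule bdd_belowI[of _ 0]) (auto intro: chain_len_nonneg)
qed

lemma chain_len_stays_on_edge: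
  "chain_len E src tgt len x z d \<Longrightarrow> x = Ept e s \<Longrightarrow> d < s \<Longrightarrow> d < len e - s
   \<Longrightarrow> \<exists>s'. z = Ept e s' \<and> \<bar>s' - s\<bar> \<le> d"
proof (induction arbitrary: s rule: chain_len.induct)
  case (refl x)
  then show ?case by auto
next
  case (step x y d1 z d2)
  from step(1) obtain e' s1 t1 where e': "s1 \<in> {0..len e'}" "t1 \<in> {0..len e'}"
      "pos src tgt len e' s1 = x" "pos src tgt len e' t1 = y" "d1 = \<bar>s1 - t1\<bar>"
    unfolding edge_step_def by auto
  with step.prems have "e' = e" "s1 = s"
    using pos_eq_EptD by metis+
  moreover have "0 \<le> d2" using step(2) by (rule chain_len_nonneg)
  ultimately have "0 < t1" "t1 < len e" and y: "y = Ept e t1"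
    using step.prems e' by auto
  with step.IH[OF y] step.prems e' \<open>0 \<le> d2\<close> \<open>s1 = s\<close>
  obtain s' where "z = Ept e s'" "\<bar>s' - t1\<bar> \<le> d2" by fastforce
  then show ?case using e' \<open>s1 = s\<close> by auto
qed

lemma chain_len_to_vertex:
  assumes graph: "metric_graph V E src tgt len" and x: "x \<in> gpoints V E len"
  shows "\<exists>v\<in>V. \<exists>d d'. chain_len E src tgt len x (Vtx v) d \<and> chain_len E src tgt len (Vtx v) x d'"
proof -
  from x consider (vertex) v where "v \<in> V" "x = Vtx v"
    | (edge) e t where "e \<in> E" "0 < t" "t < len e" "x = Ept e t"
    unfolding gpoints_def by blast
  then show ?thesis
  proof cases
    case vertex
    then show ?thesis by (meson chain_len.refl)
  next
    case edge
    then have "src e \<in> V" using graph unfolding metric_graph_def by blast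
    moreover have "chain_len E src tgt len x (Vtx (src e)) t"
      "chain_len E src tgt len (Vtx (src e)) x t"
      using edge edge_step_within_edge[of e E 0 len t src tgt]
        edge_step_within_edge[of e E t len 0 src tgt]
      by (auto intro: edge_step_imp_chain_len)
    ultimately show ?thesis by blast
  qed
qed

lemma chain_len_between_vertices:
  assumes graph: "metric_graph V E src tgt len"
    and "(u, w) \<in> ({(src e, tgt e) | e. e \<in> E} \<union> {(tgt e, src e) | e. e \<in> E})\<^sup>*"
  shows "\<exists>d. chain_len E src tgt len (Vtx u) (Vtx w) d"
  using assms(2)
proof (induction rule: rtrancl_induct)
  case base
  then show ?case by (meson chain_len.refl)
next
  case (step y z)
  then obtain d where d: "chain_len E src tgt len (Vtx u) (Vtx y) d" by blast
  from step(2) obtain e where e: "e \<in> E" "(y = src e \<and> z = tgt e) \<or> (y = tgt e \<and> z = src e)"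
    by blast
  have "len e > 0" using graph e unfolding metric_graph_def by blast
  then have "edge_step E src tgt len (Vtx y) (Vtx z) (len e)"
    using e edge_step_within_edge[of e E 0 len "len e" src tgt]
      edge_step_within_edge[of e E "len e" len 0 src tgt]
    by auto
  then show ?case using chain_len_trans[OF d edge_step_imp_chain_len] by blast
qed

lemma chain_len_exists:
  assumes graph: "metric_graph V E src tgt len"
    and "x \<in> gpoints V E len" "y \<in> gpoints V E len"
  shows "\<exists>d. chain_len E src tgt len x y d"
proof -
  obtain u d1 where u: "u \<in> V" "chain_len E src tgt len x (Vtx u) d1"
    using chain_len_to_vertex[OF graph assms(2)] by blast
  obtain w d2 where w: "w \<in> V" "chain_len E src tgt len (Vtx w) y d2"
    using chain_len_to_vertex[OF graph assms(3)] by blast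
  obtain d where "chain_len E src tgt len (Vtx u) (Vtx w) d"
    using chain_len_between_vertices[OF graph] graph u w unfolding metric_graph_def by blast
  then show ?thesis using chain_len_trans u w by blast
qed

lemma gdist_less_imp_chain_len_less:
  assumes "metric_graph V E src tgt len" "x \<in> gpoints V E len" "y \<in> gpoints V E len"
    and "gdist E src tgt len x y < r"
  obtains d where "chain_len E src tgt len x y d" "d < r"
  using chain_len_exists[OF assms(1-3)] assms(4)
    cInf_lessD[of "{d. chain_len E src tgt len x y d}" r]
  unfolding gdist_def by blast

lemma completion_dist_along_edge:
  assumes compl: "is_completion V E src tgt len emb Gbar"
    and e: "e \<in> E" and s: "s \<in> {0<..<len e}" and t: "t \<in> {0<..<len e}"
  shows "dist (emb (Ept e s)) (emb (Ept e t)) \<le> \<bar>s - t\<bar>"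
proof -
  have "Ept e s \<in> gpoints V E len" "Ept e t \<in> gpoints V E len"
    using e s t unfolding gpoints_def by auto
  moreover have "gdist E src tgt len (Ept e s) (Ept e t) \<le> \<bar>s - t\<bar>"
    using edge_step_within_edge[of e E s len t src tgt] e s t
    by (auto intro: gdist_le_chain_len edge_step_imp_chain_len)
  ultimately show ?thesis using compl unfolding is_completion_def by simp
qed

lemma completion_edge_continuous:
  assumes compl: "is_completion V E src tgt len emb Gbar"
    and e: "e \<in> E" and "0 < a" "b < len e"
  shows "continuous_on {a..b} (\<lambda>s. emb (Ept e s))"
proof -
  have "1-lipschitz_on {a..b} (\<lambda>s. emb (Ept e s))"
  proof (rule lipschitz_onI)
    fix s t assume "s \<in> {a..b}" "t \<in> {a..b}"
    then show "dist (emb (Ept e s)) (emb (Ept e t)) \<le> 1 * dist s t"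
      using completion_dist_along_edge[OF compl e, of s t] assms(3,4)
      by (simp add: dist_real_def)
  qed simp
  then show ?thesis by (rule lipschitz_on_continuous_on)
qed

lemma gpoints_near_edge_point:
  assumes graph: "metric_graph V E src tgt len"
    and compl: "is_completion V E src tgt len emb Gbar"
    and e: "e \<in> E" and r: "r < t" "r < len e - t"
  shows "ball (emb (Ept e t)) r \<inter> emb ` gpoints V E len \<subseteq> (\<lambda>s. emb (Ept e s)) ` {t - r..t + r}"
proof
  let ?G = "gpoints V E len"
  fix y assume y: "y \<in> ball (emb (Ept e t)) r \<inter> emb ` ?G"
  then obtain q where q: "q \<in> ?G" "y = emb q" by blast
  have "dist (emb (Ept e t)) y < r" using y by simp
  then have "0 < r" by (meson le_less_trans zero_le_dist)
  then have p: "Ept e t \<in> ?G" using e r unfolding gpoints_def by auto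
  have "gdist E src tgt len (Ept e t) q = dist (emb (Ept e t)) y"
    using compl p q unfolding is_completion_def by simp
  with \<open>dist (emb (Ept e t)) y < r\<close> have "gdist E src tgt len (Ept e t) q < r" by simp
  then obtain d where d: "chain_len E src tgt len (Ept e t) q d" "d < r"
    using gdist_less_imp_chain_len_less[OF graph p q(1)] by blast
  then obtain s where "q = Ept e s" "\<bar>s - t\<bar> \<le> d"
    using chain_len_stays_on_edge[OF d(1) HOL.refl] r by force
  moreover have "s \<in> {t - r..t + r}" using \<open>\<bar>s - t\<bar> \<le> d\<close> d(2) by auto
  ultimately show "y \<in> (\<lambda>s. emb (Ept e s)) ` {t - r..t + r}" using q by blast
qed

lemma completion_ball_subset_edge:
  assumes graph: "metric_graph V E src tgt len"
    and compl: "is_completion V E src tgt len emb Gbar"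
    and e: "e \<in> E" and r: "r < t" "r < len e - t"
  shows "ball (emb (Ept e t)) r \<inter> Gbar \<subseteq> (\<lambda>s. emb (Ept e s)) ` {t - r..t + r}"
proof -
  let ?B = "ball (emb (Ept e t)) r" and ?G = "gpoints V E len"
  have "closed ((\<lambda>s. emb (Ept e s)) ` {t - r..t + r})"
    using completion_edge_continuous[OF compl e] r
    by (intro compact_imp_closed compact_continuous_image) auto
  then have "closure (?B \<inter> emb ` ?G) \<subseteq> (\<lambda>s. emb (Ept e s)) ` {t - r..t + r}"
    using gpoints_near_edge_point[OF graph compl e r] by (rule closure_minimal[rotated])
  moreover have "?B \<inter> Gbar \<subseteq> closure (?B \<inter> emb ` ?G)"
    using compl open_Int_closure_subset[of ?B "emb ` ?G"]
    unfolding is_completion_def by blast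
  ultimately show ?thesis by blast
qed

lemma harmonic_edge_increment:
  assumes harm: "harmonic V E src tgt len B emb Gbar f"
    and e: "e \<in> E" "len e > 0" and "s \<in> {0..len e}" "t \<in> {0..len e}"
  shows "f (emb (pos src tgt len e s)) - f (emb (pos src tgt len e t))
           = slope src tgt len emb f e * (s - t)"
proof -
  obtain a b where ab: "\<forall>u\<in>{0..len e}. f (emb (pos src tgt len e u)) = a + b * u"
    using harm e unfolding harmonic_def by blast
  have "f (emb (pos src tgt len e (len e))) = a + b * len e" "f (emb (pos src tgt len e 0)) = a"
    using ab e(2) by (simp_all del: pos_0 pos_len)
  then have "slope src tgt len emb f e = b"
    using e(2) unfolding slope_def by simp
  then show ?thesis using ab assms(4,5) by (simp add: algebra_simps)
qed

lemma regular_level_point_on_edge: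
  assumes reg: "regular_value V E src tgt len emb Gbar f c"
    and p: "p \<in> gpoints V E len" "f (emb p) = c"
  obtains e t where "e \<in> E" "0 < t" "t < len e" "p = Ept e t"
    "slope src tgt len emb f e \<noteq> 0"
proof -
  have "\<not> critical_point src tgt len emb f p"
    using reg p unfolding regular_value_def critical_value_def by blast
  then show ?thesis
    using p(1) that unfolding gpoints_def critical_point_def by auto
qed

lemma harmonic_level_set_isolated_at_edge_point:
  assumes graph: "metric_graph V E src tgt len"
    and compl: "is_completion V E src tgt len emb Gbar"
    and harm: "harmonic V E src tgt len B emb Gbar f"
    and e: "e \<in> E" "0 < t" "t < len e" and slope: "slope src tgt len emb f e \<noteq> 0"
  shows "emb (Ept e t) isolated_in {x\<in>Gbar. f x = f (emb (Ept e t))}"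
proof -
  define r where "r = min t (len e - t) / 2"
  have r: "0 < r" "r < t" "r < len e - t" using e unfolding r_def by auto
  have "emb (Ept e t) \<in> Gbar"
    using compl e unfolding is_completion_def gpoints_def by blast
  moreover have "y = emb (Ept e t)"
    if "y \<in> Gbar" "f y = f (emb (Ept e t))" "dist (emb (Ept e t)) y < r" for y
  proof -
    have "y \<in> ball (emb (Ept e t)) r \<inter> Gbar" using that by simp
    then obtain s where s: "s \<in> {t - r..t + r}" "y = emb (Ept e s)"
      using completion_ball_subset_edge[OF graph compl e(1) r(2,3)] by blast
    then have "f y - f (emb (Ept e t)) = slope src tgt len emb f e * (s - t)"
      using harmonic_edge_increment[OF harm e(1), of s t] r e by auto
    with that slope have "s = t" by simp
    then show ?thesis using s by simp
  qed
  ultimately show ?thesis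
    using r unfolding isolated_in_dist_Ex_iff by blast
qed

theorem lemma3p8:
  fixes V :: "'v set" and E :: "'e set" and src tgt :: "'e \<Rightarrow> 'v" and len :: "'e \<Rightarrow> real"
    and B :: "'v set" and emb :: "('v,'e) gpt \<Rightarrow> 'p::metric_space" and Gbar :: "'p set"
    and f :: "'p \<Rightarrow> real" and c :: real
  assumes graph: "metric_graph V E src tgt len"
    and bverts: "B \<subseteq> V" "{v\<in>V. degree E src tgt v = 1} \<subseteq> B"
    and compl: "is_completion V E src tgt len emb Gbar"
    and cpt: "compact Gbar"
    and tdisc: "totally_disconnected (bdry V E len B emb Gbar)"
    and harm: "harmonic V E src tgt len B emb Gbar f"
    and reg: "regular_value V E src tgt len emb Gbar f c"
    and nobd: "\<not> (\<exists>x\<in>bdry V E len B emb Gbar. f x = c)"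
  shows "finite {x\<in>Gbar. f x = c}"
proof -
  let ?S = "{x\<in>Gbar. f x = c}"
  have "continuous_on Gbar f" using harm by (simp add: harmonic_def)
  then have "closed ?S"
    by (rule continuous_closed_preimage_constant[OF _ compact_imp_closed[OF cpt]])
  then have "compact ?S"
    using compact_Int_closed[OF cpt, of ?S] by (simp add: Int_absorb1 Int_commute)
  moreover have "x isolated_in ?S" if x: "x \<in> ?S" for x
  proof -
    obtain p where p: "p \<in> gpoints V E len" "x = emb p"
      using x nobd unfolding bdry_def by blast
    then obtain e t where "e \<in> E" "0 < t" "t < len e" "p = Ept e t"
        "slope src tgt len emb f e \<noteq> 0"
      using regular_level_point_on_edge[OF reg] x by auto
    then show ?thesis
      using harmonic_level_set_isolated_at_edge_point[OF graph compl harm] p x by auto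
  qed
  ultimately show ?thesis
    using discrete_compact_finite_iff unfolding discrete_def by blast
qed

end
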